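(* Let $k>0$ be real and let $\omega_1,\omega_2$ be the two roots of $x^2+x+1$. Put $A=\omega_1k-1$ and $B=\omega_2k-1$. Then for every integer $n\ge1$, $$J_{-n}=\frac{1}{k^2+k+1}\left[k\left(\frac1k\right)^n+\frac{B\omega_1^n-A\omega_2^n}{\omega_1-\omega_2}\right].$$
   Context: For real $k>0$, the third-order $k$-Jacobsthal sequence $(J_n)=(J_n^{(3)}(k))$ is defined by $J_0=0$, $J_1=1$, $J_2=k-1$ and $J_{n+3}=(k-1)J_{n+2}+(k-1)J_{n+1}+kJ_n$, and extended to negative indices by the backward recurrence $J_{-n}=\frac{1-k}{k}J_{-(n-1)}+\frac{1-k}{k}J_{-(n-2)}+\frac{1}{k}J_{-(n-3)}$ for $n\ge1$. *)

theory Defs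
  imports Complex_Main
begin

fun Jpos :: "real \<Rightarrow> nat \<Rightarrow> real" where
  "Jpos k 0 = 0"
| "Jpos k (Suc 0) = 1"
| "Jpos k (Suc (Suc 0)) = k - 1"
| "Jpos k (Suc (Suc (Suc n))) =
     (k - 1) * Jpos k (Suc (Suc n)) + (k - 1) * Jpos k (Suc n) + k * Jpos k n"

fun Jneg :: "real \<Rightarrow> nat \<Rightarrow> real" where
  "Jneg k 0 = 0"
| "Jneg k (Suc 0) =
     (1 - k) / k * Jpos k 0 + (1 - k) / k * Jpos k 1 + 1 / k * Jpos k 2"
| "Jneg k (Suc (Suc 0)) =
     (1 - k) / k * Jneg k 1 + (1 - k) / k * Jpos k 0 + 1 / k * Jpos k 1"
| "Jneg k (Suc (Suc (Suc n))) =
     (1 - k) / k * Jneg k (Suc (Suc n)) + (1 - k) / k * Jneg k (Suc n) + 1 / k * Jneg k n"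

definition Jac3 :: "real \<Rightarrow> int \<Rightarrow> real" where
  "Jac3 k i = (if 0 \<le> i then Jpos k (nat i) else Jneg k (nat (- i)))"

end

theory Submission
  imports Defs
begin

text \<open>Reversed, the recurrence reads \<open>k J(-n-3) + (k-1) J(-n-2) + (k-1) J(-n-1) - J(-n) = 0\<close>;
  its characteristic polynomial \<open>k x\<^sup>3 + (k-1) x\<^sup>2 + (k-1) x - 1 = (k x - 1)(x\<^sup>2 + x + 1)\<close>
  has the roots \<open>1/k\<close>, \<open>\<omega>\<^sub>1\<close>, \<open>\<omega>\<^sub>2\<close>. Every linear combination of their powers therefore
  satisfies the recurrence, and the stated combination takes the values \<open>0, 0, 1/k\<close> at
  \<open>n = 0, 1, 2\<close>, which are \<open>J(0), J(-1), J(-2)\<close>. Since \<open>J(0) = 0\<close> agrees with \<open>Jneg k 0\<close>,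
  the backward recurrence holds from \<open>n = 0\<close> on, and three initial values determine
  the sequence.\<close>

definition satisfies_rec3 :: "'a::comm_ring_1 \<Rightarrow> 'a \<Rightarrow> 'a \<Rightarrow> (nat \<Rightarrow> 'a) \<Rightarrow> bool" where
  "satisfies_rec3 a b c f \<longleftrightarrow> (\<forall>n. f (n + 3) = a * f (n + 2) + b * f (n + 1) + c * f n)"

lemma satisfies_rec3_power:
  assumes "x ^ 3 = a * x\<^sup>2 + b * x + c"
  shows "satisfies_rec3 a b c (\<lambda>n. x ^ n)"
proof -
  have "x ^ (n + 3) = x ^ n * (a * x\<^sup>2 + b * x + c)" for n
    by (simp add: power_add assms)
  also have "\<dots> n = a * x ^ (n + 2) + b * x ^ (n + 1) + c * x ^ n" for n
    by (simp add: power_add power2_eq_square algebra_simps)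
  finally show ?thesis by (simp add: satisfies_rec3_def)
qed

lemma satisfies_rec3_cmult:
  "satisfies_rec3 a b c f \<Longrightarrow> satisfies_rec3 a b c (\<lambda>n. u * f n)"
  by (simp add: satisfies_rec3_def algebra_simps)

lemma satisfies_rec3_add:
  "satisfies_rec3 a b c f \<Longrightarrow> satisfies_rec3 a b c g \<Longrightarrow> satisfies_rec3 a b c (\<lambda>n. f n + g n)"
  by (simp add: satisfies_rec3_def algebra_simps)

lemma satisfies_rec3_diff:
  "satisfies_rec3 a b c f \<Longrightarrow> satisfies_rec3 a b c g \<Longrightarrow> satisfies_rec3 a b c (\<lambda>n. f n - g n)"
  by (simp add: satisfies_rec3_def algebra_simps)

lemma satisfies_rec3_divide:
  fixes f :: "nat \<Rightarrow> 'a::field"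
  shows "satisfies_rec3 a b c f \<Longrightarrow> satisfies_rec3 a b c (\<lambda>n. f n / u)"
  by (simp add: satisfies_rec3_def add_divide_distrib)

lemma satisfies_rec3_of_real:
  "satisfies_rec3 a b c f \<Longrightarrow>
    satisfies_rec3 (of_real a) (of_real b) (of_real c)
      (\<lambda>n. of_real (f n) :: 'a::{real_algebra_1, comm_ring_1})"
  by (simp add: satisfies_rec3_def)

lemma satisfies_rec3_unique:
  assumes "satisfies_rec3 a b c f" and "satisfies_rec3 a b c g"
    and "f 0 = g 0" and "f 1 = g 1" and "f 2 = g 2"
  shows "f n = g n"
proof -
  have "f n = g n \<and> f (n + 1) = g (n + 1) \<and> f (n + 2) = g (n + 2)"
  proof (induction n)
    case 0
    then show ?case using assms(3-5) by (simp add: numeral_2_eq_2)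
  next
    case (Suc n)
    then have "f (n + 3) = g (n + 3)"
      using assms(1,2) unfolding satisfies_rec3_def by metis
    with Suc show ?case by (simp add: numeral_eq_Suc)
  qed
  then show ?thesis by simp
qed

lemma backward_char_root:
  fixes K x :: "'a::field"
  assumes "K \<noteq> 0" and "(K * x - 1) * (x\<^sup>2 + x + 1) = 0"
  shows "x ^ 3 = (1 - K) / K * x\<^sup>2 + (1 - K) / K * x + 1 / K"
proof -
  have "K * x ^ 3 = (1 - K) * x\<^sup>2 + (1 - K) * x + 1"
    using assms(2) by (simp add: algebra_simps power2_eq_square power3_eq_cube)
  then have "x ^ 3 = ((1 - K) * x\<^sup>2 + (1 - K) * x + 1) / K"
    using assms(1) by (simp add: eq_divide_eq mult.commute)
  then show ?thesis by (simp add: add_divide_distrib)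
qed

lemma distinct_roots_x2_x_1:
  fixes w1 w2 :: "'a::idom"
  assumes "w1 \<noteq> w2" and "w1\<^sup>2 + w1 + 1 = 0" and "w2\<^sup>2 + w2 + 1 = 0"
  shows "w1 + w2 = -1" and "w1 * w2 = 1"
proof -
  have "(w1 - w2) * (w1 + w2 + 1) = (w1\<^sup>2 + w1 + 1) - (w2\<^sup>2 + w2 + 1)"
    by (simp add: algebra_simps power2_eq_square)
  with assms show sum: "w1 + w2 = -1"
    by (simp add: eq_neg_iff_add_eq_0)
  have "w1 * w2 = w1 * (w1 + w2) - (w1\<^sup>2 + w1 + 1) + w1 + 1"
    by (simp add: algebra_simps power2_eq_square)
  with assms(2) sum show "w1 * w2 = 1" by simp
qed

lemma x2_x_1_pos:
  fixes x :: real
  shows "0 < x\<^sup>2 + x + 1"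
proof -
  have "x\<^sup>2 + x + 1 = (x + 1 / 2)\<^sup>2 + 3 / 4"
    by (simp add: power2_eq_square field_simps)
  then show ?thesis by (simp add: add_nonneg_pos)
qed

definition Jneg_binet :: "'a::field \<Rightarrow> 'a \<Rightarrow> 'a \<Rightarrow> nat \<Rightarrow> 'a" where
  "Jneg_binet K w1 w2 n = 1 / (K\<^sup>2 + K + 1) *
     (K * (1 / K) ^ n + ((w2 * K - 1) * w1 ^ n - (w1 * K - 1) * w2 ^ n) / (w1 - w2))"

lemma Jneg_binet_satisfies_rec3:
  assumes "K \<noteq> 0" and "w1\<^sup>2 + w1 + 1 = 0" and "w2\<^sup>2 + w2 + 1 = 0"
  shows "satisfies_rec3 ((1 - K) / K) ((1 - K) / K) (1 / K) (Jneg_binet K w1 w2)"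
  unfolding Jneg_binet_def using assms
  by (intro satisfies_rec3_cmult satisfies_rec3_add satisfies_rec3_diff satisfies_rec3_divide
      satisfies_rec3_power backward_char_root) simp_all

lemma Jneg_binet_initial:
  fixes K w1 w2 :: "'a::field"
  assumes "K \<noteq> 0" and "K\<^sup>2 + K + 1 \<noteq> 0"
    and "w1 \<noteq> w2" and "w1\<^sup>2 + w1 + 1 = 0" and "w2\<^sup>2 + w2 + 1 = 0"
  shows "Jneg_binet K w1 w2 0 = 0" and "Jneg_binet K w1 w2 1 = 0"
    and "Jneg_binet K w1 w2 2 = 1 / K"
proof -
  have w12: "w1 - w2 \<noteq> 0" using assms(3) by simp
  have "(w2 * K - 1) - (w1 * K - 1) = - K * (w1 - w2)" by (simp add: algebra_simps)
  then show "Jneg_binet K w1 w2 0 = 0" using w12 by (simp add: Jneg_binet_def)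
  have "((w2 * K - 1) * w1 - (w1 * K - 1) * w2) / (w1 - w2) = -1"
    using w12 by (simp add: divide_eq_eq algebra_simps)
  then show "Jneg_binet K w1 w2 1 = 0" using assms(1) by (simp add: Jneg_binet_def)
  have "(w2 * K - 1) * w1\<^sup>2 - (w1 * K - 1) * w2\<^sup>2 = (w1 - w2) * (K * (w1 * w2) - (w1 + w2))"
    by (simp add: algebra_simps power2_eq_square)
  then have "((w2 * K - 1) * w1\<^sup>2 - (w1 * K - 1) * w2\<^sup>2) / (w1 - w2) = K + 1"
    using w12 distinct_roots_x2_x_1[OF assms(3-5)] by simp
  then show "Jneg_binet K w1 w2 2 = 1 / K"
    using assms(1,2) by (simp add: Jneg_binet_def field_simps power2_eq_square)
qed

lemma Jneg_satisfies_rec3: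
  "satisfies_rec3 ((1 - k) / k) ((1 - k) / k) (1 / k) (Jneg k)"
  by (simp add: satisfies_rec3_def numeral_eq_Suc)

lemma Jneg_initial: "Jneg k 0 = 0" "Jneg k 1 = 0" "Jneg k 2 = 1 / k"
proof -
  have "(1 - k) / k + (k - 1) / k = 0"
    by (simp add: add_divide_distrib[symmetric])
  then show "Jneg k 1 = 0" by (simp add: numeral_2_eq_2)
  then show "Jneg k 2 = 1 / k" by (simp add: numeral_2_eq_2)
qed simp

lemma Jneg_eq_Jneg_binet:
  fixes w1 w2 :: "'a::real_field"
  assumes "k \<noteq> 0" and "w1 \<noteq> w2" and "w1\<^sup>2 + w1 + 1 = 0" and "w2\<^sup>2 + w2 + 1 = 0"
  shows "of_real (Jneg k n) = Jneg_binet (of_real k) w1 w2 n"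
proof -
  define K :: 'a where "K = of_real k"
  have K: "K \<noteq> 0" using assms(1) by (simp add: K_def)
  have "k\<^sup>2 + k + 1 \<noteq> 0" using x2_x_1_pos[of k] by simp
  then have "of_real (k\<^sup>2 + k + 1) \<noteq> (0 :: 'a)" by (metis of_real_eq_0_iff)
  then have D: "K\<^sup>2 + K + 1 \<noteq> 0" by (simp add: K_def)
  have "satisfies_rec3 ((1 - K) / K) ((1 - K) / K) (1 / K) (\<lambda>n. of_real (Jneg k n))"
    using satisfies_rec3_of_real[where 'a = 'a, OF Jneg_satisfies_rec3[of k]]
    by (simp add: K_def of_real_divide of_real_diff)
  moreover have "satisfies_rec3 ((1 - K) / K) ((1 - K) / K) (1 / K) (Jneg_binet K w1 w2)"
    using K assms(3,4) by (rule Jneg_binet_satisfies_rec3)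
  moreover have "of_real (Jneg k 0) = Jneg_binet K w1 w2 0"
    and "of_real (Jneg k 1) = Jneg_binet K w1 w2 1"
    and "of_real (Jneg k 2) = Jneg_binet K w1 w2 2"
    unfolding Jneg_initial using Jneg_binet_initial[OF K D assms(2-4)] by (simp_all add: K_def)
  ultimately show ?thesis
    unfolding K_def by (rule satisfies_rec3_unique)
qed

lemma Jac3_neg: "Jac3 k (- int n) = Jneg k n"
  by (cases "n = 0") (simp_all add: Jac3_def)

theorem mainTheorem9:
  fixes k :: real and w1 w2 :: complex and n :: nat
  assumes "k > 0"
    and "w1 \<noteq> w2"
    and "w1\<^sup>2 + w1 + 1 = 0"
    and "w2\<^sup>2 + w2 + 1 = 0"
    and "n \<ge> 1"
  shows "complex_of_real (Jac3 k (- int n)) =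
    1 / (of_real k ^ 2 + of_real k + 1) *
      (of_real k * (1 / of_real k) ^ n +
       ((w2 * of_real k - 1) * w1 ^ n - (w1 * of_real k - 1) * w2 ^ n) / (w1 - w2))"
  using Jneg_eq_Jneg_binet[OF _ assms(2-4)] assms(1)
  by (simp add: Jac3_neg Jneg_binet_def)

end
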